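(* Let $u,\alpha\in k[T]$ satisfy $P_2(T)^p-P_2^\sigma(T^p)=m_p\bigl(\bar P'(T)^p u(T)-2\alpha(T)\bar P(T)^p\bigr)$, and let $v,\beta\in k[T]$ satisfy $Q_2(T)^p-Q_2^\sigma(T^p)=m_p\bigl(\bar Q'(T)^p v(T)-2\beta(T)\bar Q(T)^p\bigr)$. For $0\leq i\leq g-1$ set $$f_U=x^{ip}\,\frac{x^{p-1}+u'(x)}{y^{p-1}}\,\frac{dx}{y},\quad f_V=-x_1^{p(g-1-i)}\,\frac{x_1^{p-1}+v'(x_1)}{t^{p-1}}\,\frac{dx_1}{t},\quad h=x^{ip}\,\frac{u(x)+x^{2p}v(x_1)}{y^p}.$$ Then $f_U\in\Omega^1_{U_0/k}$, $f_V\in\Omega^1_{V_0/k}$ (i.e. they are regular differentials on $U_0$, resp. $V_0$), $h\in\mathcal{O}(U_0\cap V_0)$, and $$f_V-f_U+dh=0.$$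
   Context: $k$ is a finite field of characteristic $p\neq 2$, $W_2(k)=W(k)/p^2$, $\sigma$ the Frobenius of $W_2(k)$; for $Q=\sum b_jT^j$, $Q^\sigma=\sum\sigma(b_j)T^j$; $m_p:k[T]\to W_2(k)[T]$ is induced by multiplication by $p$. Let $P\in W(k)[X]$ be monic of odd degree $d=2g+1$, separable over $\operatorname{Frac}W(k)$, with separable reduction $\bar P\in k[X]$; $P_2$ is its reduction mod $p^2$, $Q_2(x_1)=x_1^{d+1}P_2(1/x_1)$, $\bar Q(x_1)=x_1^{d+1}\bar P(1/x_1)$. $X_0$ is the curve over $k$ obtained by gluing $U_0=\operatorname{Spec}k[x,y]/(y^2-\bar P(x))$ and $V_0=\operatorname{Spec}k[x_1,t]/(t^2-\bar Q(x_1))$ along $x_1=1/x$, $t=y/x^{g+1}$. (These pairs $(u,\alpha)$ and $(v,\beta)$ define lifts of Frobenius $x\mapsto x^p+p\,u(x)$, $y\mapsto y^p+y^p p\,\alpha(x)$ on $U_1$ and $x_1\mapsto x_1^p+p\,v(x_1)$, $t\mapsto t^p+t^p p\,\beta(x_1)$ on $V_1$; the triple $(f_U,f_V,h)$ is the image of $x^i\,dx/y$ under the associated Deligne–Illusie map.) *)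

theory Defs
  imports "HOL-Computational_Algebra.Computational_Algebra"
begin

type_synonym 'k rf = "'k poly fract"

definition rf_deriv :: "'k::field rf \<Rightarrow> 'k rf" where
  "rf_deriv z = (SOME D. \<exists>n m. m \<noteq> 0 \<and> z = Fract n m \<and>
                     D = Fract (pderiv n * m - n * pderiv m) (m * m))"

text \<open>An element (a, b) stands for a + b*y, with a, b in k(x) and y^2 = Pb(x).
  A meromorphic differential on X_0 is written w = F dx with F in K
  (Omega_K is the free K-module of rank 1 generated by dx);
  we represent it by F.\<close>

type_synonym 'k hf = "'k rf \<times> 'k rf"

definition hf_add :: "'k::field hf \<Rightarrow> 'k hf \<Rightarrow> 'k hf" where
  "hf_add z w = (fst z + fst w, snd z + snd w)"

definition hf_neg :: "'k::field hf \<Rightarrow> 'k hf" where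
  "hf_neg z = (- fst z, - snd z)"

definition hf_mult :: "'k::field poly \<Rightarrow> 'k hf \<Rightarrow> 'k hf \<Rightarrow> 'k hf" where
  "hf_mult Pb z w = (fst z * fst w + snd z * snd w * to_fract Pb,
                     fst z * snd w + snd z * fst w)"

definition hf_one :: "'k::field hf" where "hf_one = (1, 0)"

definition hf_pow :: "'k::field poly \<Rightarrow> 'k hf \<Rightarrow> nat \<Rightarrow> 'k hf" where
  "hf_pow Pb z n = (hf_mult Pb z ^^ n) hf_one"

text \<open>Inverse in the field K: (a + b y)^{-1} = (a - b y) / (a^2 - b^2 Pb).\<close>
definition hf_inv :: "'k::field poly \<Rightarrow> 'k hf \<Rightarrow> 'k hf" where
  "hf_inv Pb z = (let n = fst z * fst z - snd z * snd z * to_fract Pb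
                  in (fst z / n, - snd z / n))"

definition hf_const :: "'k::field \<Rightarrow> 'k hf" where
  "hf_const c = (to_fract [:c:], 0)"

definition hf_poly :: "'k::field poly \<Rightarrow> 'k poly \<Rightarrow> 'k hf \<Rightarrow> 'k hf" where
  "hf_poly Pb q z = foldr (\<lambda>i acc. hf_add (hf_mult Pb (hf_const (coeff q i)) (hf_pow Pb z i)) acc)
                      [0..<Suc (degree q)] (0, 0)"

definition hf_x :: "'k::field hf" where "hf_x = (to_fract [:0, 1:], 0)"
definition hf_y :: "'k::field hf" where "hf_y = (0, 1)"
definition hf_x1 :: "'k::field poly \<Rightarrow> 'k hf" where "hf_x1 Pb = hf_inv Pb hf_x"
definition hf_t :: "'k::field poly \<Rightarrow> nat \<Rightarrow> 'k hf" where
  "hf_t Pb g = hf_mult Pb hf_y (hf_pow Pb (hf_x1 Pb) (g + 1))"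

text \<open>Exterior derivative d : K \<rightarrow> Omega_K, d z = (dz/dx) dx, using
  d(a + b y) = a' dx + b' y dx + b dy and 2 y dy = Pb'(x) dx.\<close>
definition hf_d :: "'k::field poly \<Rightarrow> 'k hf \<Rightarrow> 'k hf" where
  "hf_d Pb z = (rf_deriv (fst z),
                rf_deriv (snd z) + snd z * to_fract (pderiv Pb) / (2 * to_fract Pb))"

text \<open>O(U_0) = k[x,y]/(y^2 - Pb(x)) inside K.\<close>
definition O_U :: "'k::field poly \<Rightarrow> 'k hf set" where
  "O_U Pb = {(to_fract a, to_fract b) | a b. True}"

text \<open>O(V_0) = k[x_1,t]/(t^2 - Qb(x_1)) inside K.\<close>
definition O_V :: "'k::field poly \<Rightarrow> nat \<Rightarrow> 'k hf set" where
  "O_V Pb g = {hf_add (hf_poly Pb A (hf_x1 Pb)) (hf_mult Pb (hf_poly Pb B (hf_x1 Pb)) (hf_t Pb g))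
               | A B. True}"

text \<open>O(U_0 \<inter> V_0) = O(U_0)[1/x].\<close>
definition O_UV :: "'k::field poly \<Rightarrow> 'k hf set" where
  "O_UV Pb = {hf_mult Pb f (hf_pow Pb (hf_x1 Pb) n) | f n. f \<in> O_U Pb}"

definition Omega_U :: "'k::field poly \<Rightarrow> 'k hf set" where
  "Omega_U Pb = {hf_add (hf_mult Pb a (hf_d Pb hf_x)) (hf_mult Pb b (hf_d Pb hf_y))
                 | a b. a \<in> O_U Pb \<and> b \<in> O_U Pb}"

definition Omega_V :: "'k::field poly \<Rightarrow> nat \<Rightarrow> 'k hf set" where
  "Omega_V Pb g = {hf_add (hf_mult Pb a (hf_d Pb (hf_x1 Pb))) (hf_mult Pb b (hf_d Pb (hf_t Pb g)))
                   | a b. a \<in> O_V Pb g \<and> b \<in> O_V Pb g}"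

text \<open>W_2(k) is characterised (up to unique isomorphism) as a commutative ring W with a
  surjective ring homomorphism \<pi> : W \<rightarrow> k whose kernel is pW and such that the
  p-torsion of W is also pW (i.e. W is flat over Z/p^2 lifting k); \<sigma> is the ring
  endomorphism lifting Frobenius, and m_p : k \<rightarrow> W is the map \<pi>(a) \<mapsto> p a.\<close>
definition is_W2 :: "nat \<Rightarrow> ('w::comm_ring_1 \<Rightarrow> 'k::field) \<Rightarrow> ('w \<Rightarrow> 'w) \<Rightarrow> ('k \<Rightarrow> 'w) \<Rightarrow> bool" where
  "is_W2 p \<pi> \<sigma> mp \<longleftrightarrow>
     (\<forall>a b. \<pi> (a + b) = \<pi> a + \<pi> b) \<and> (\<forall>a b. \<pi> (a * b) = \<pi> a * \<pi> b) \<and> \<pi> 1 = 1 \<and>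
     surj \<pi> \<and>
     (\<forall>a. \<pi> a = 0 \<longleftrightarrow> (\<exists>b. a = of_nat p * b)) \<and>
     (\<forall>a. of_nat p * a = 0 \<longleftrightarrow> \<pi> a = 0) \<and>
     (\<forall>a b. \<sigma> (a + b) = \<sigma> a + \<sigma> b) \<and> (\<forall>a b. \<sigma> (a * b) = \<sigma> a * \<sigma> b) \<and> \<sigma> 1 = 1 \<and>
     (\<forall>a. \<pi> (\<sigma> a) = (\<pi> a) ^ p) \<and>
     (\<forall>a. mp (\<pi> a) = of_nat p * a)"

end

theory Submission
  imports Defs
begin

text \<open>All functions and differentials involved are of the form \<open>c\<close> or \<open>c\<cdot>y\<close> with
  \<open>c \<in> k(x)\<close>, so everything reduces to computations in \<open>k(x)\<close>. Write \<open>p = 2r + 1\<close>.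

  Differentiating \<open>P\<^sub>2\<^sup>p - P\<^sub>2\<^sup>\<sigma>(T\<^sup>p) = p(P'\<^sup>pu - 2\<alpha>P\<^sup>p)\<close> over \<open>W\<^sub>2(k)\<close> and dividing by \<open>p\<close> gives
  \<open>P'\<^sup>p(x\<^sup>p\<^sup>-\<^sup>1 + u') = P\<^sup>p\<^sup>-\<^sup>1(P' + 2\<alpha>'P)\<close>; as \<open>P\<close> is separable, \<open>P\<^sup>p\<^sup>-\<^sup>1\<close> divides \<open>x\<^sup>p\<^sup>-\<^sup>1 + u'\<close>,
  which makes \<open>f\<^sub>U = x\<^sup>i\<^sup>p(x\<^sup>p\<^sup>-\<^sup>1 + u')/P\<^sup>r\<^sup>+\<^sup>1 \<cdot> y dx\<close> regular. The same argument for \<open>Q\<close>, which is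
  separable as the reflection of \<open>P\<close>, gives the regularity of \<open>f\<^sub>V\<close>.

  Since \<open>Q\<^sub>2\<close> is the reflection of \<open>P\<^sub>2\<close>, the equation for \<open>(v, \<beta>)\<close> is the reflection of the
  one for \<open>(u, \<alpha>)\<close>; evaluating it at \<open>1/x\<close> and using Frobenius gives
  \<open>P'\<^sup>p(u + x\<^sup>2\<^sup>p v(1/x)) = P\<^sup>p(\<dots>)\<close>, so \<open>P\<^sup>p\<close> divides the numerator of \<open>h = x\<^sup>i\<^sup>p(u + x\<^sup>2\<^sup>p v(1/x))/y\<^sup>p\<close>
  up to a power of \<open>x\<close>, and \<open>h\<close> is regular on \<open>U\<^sub>0 \<inter> V\<^sub>0\<close>.

  Finally \<open>y\<^sup>-\<^sup>p\<close>, \<open>x\<^sup>i\<^sup>p\<close> and \<open>x\<^sup>2\<^sup>p\<close> are \<open>p\<close>-th powers and so have derivative zero; hence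
  \<open>dh = x\<^sup>i\<^sup>p(u' - x\<^sup>2\<^sup>p\<^sup>-\<^sup>2 v'(1/x)) y\<^sup>-\<^sup>p dx\<close>, and \<open>f\<^sub>V - f\<^sub>U + dh = 0\<close> is an identity in \<open>k(x)\<close>.\<close>

section \<open>Reflection of polynomials with respect to a degree bound\<close>

definition reflect_upto :: "nat \<Rightarrow> 'a::comm_semiring_1 poly \<Rightarrow> 'a poly" where
  "reflect_upto n f = (\<Sum>k\<le>n. monom (coeff f k) (n - k))"

lemma coeff_reflect_upto:
  "coeff (reflect_upto n f) j = (if j \<le> n then coeff f (n - j) else 0)"
proof -
  have "coeff (reflect_upto n f) j = (\<Sum>k\<le>n. if n - k = j then coeff f k else 0)"
    unfolding reflect_upto_def by (simp add: coeff_sum)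
  also have "\<dots> = (\<Sum>k\<in>(if j \<le> n then {n - j} else {}). coeff f k)"
    by (rule sum.mono_neutral_cong_right) (auto split: if_splits)
  finally show ?thesis by auto
qed

lemma reflect_upto_0 [simp]: "reflect_upto n 0 = 0"
  by (rule poly_eqI) (simp add: coeff_reflect_upto)

lemma reflect_upto_add: "reflect_upto n (f + g) = reflect_upto n f + reflect_upto n g"
  by (rule poly_eqI) (simp add: coeff_reflect_upto)

lemma reflect_upto_diff:
  "reflect_upto n (f - g) = reflect_upto n f - reflect_upto n (g :: 'a::comm_ring_1 poly)"
  by (rule poly_eqI) (simp add: coeff_reflect_upto)

lemma reflect_upto_sum: "reflect_upto n (sum h A) = (\<Sum>a\<in>A. reflect_upto n (h a))"
  by (induct A rule: infinite_finite_induct) (auto simp: reflect_upto_add)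

lemma reflect_upto_monom: "k \<le> n \<Longrightarrow> reflect_upto n (monom c k) = monom c (n - k)"
  by (rule poly_eqI) (auto simp: coeff_reflect_upto)

lemma degree_reflect_upto: "degree (reflect_upto n f) \<le> n"
  by (rule degree_le) (simp add: coeff_reflect_upto)

lemma reflect_upto_reflect_upto:
  "degree f \<le> n \<Longrightarrow> reflect_upto n (reflect_upto n f) = f"
  by (rule poly_eqI) (auto simp: coeff_reflect_upto coeff_eq_0)

lemma reflect_upto_map_poly:
  "h 0 = 0 \<Longrightarrow> reflect_upto n (map_poly h f) = map_poly h (reflect_upto n f)"
  by (rule poly_eqI) (simp add: coeff_reflect_upto coeff_map_poly)

lemma monom_mult_reflect_poly:
  "degree f = n \<Longrightarrow> monom 1 1 * reflect_poly f = reflect_upto (Suc n) f"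
  by (rule poly_eqI) (auto simp: coeff_reflect_upto coeff_monom_mult coeff_reflect_poly
      Suc_diff_le coeff_eq_0)

lemma reflect_upto_mult:
  assumes "degree f \<le> m" "degree g \<le> n"
  shows "reflect_upto (m + n) (f * g) = reflect_upto m f * reflect_upto n g"
proof -
  have "f * g = (\<Sum>i\<le>m. \<Sum>j\<le>n. monom (coeff f i * coeff g j) (i + j))"
    by (subst poly_as_sum_of_monoms'[OF assms(1), symmetric],
        subst poly_as_sum_of_monoms'[OF assms(2), symmetric])
      (simp add: sum_distrib_left sum_distrib_right mult_monom sum.swap[of _ "{..n}"])
  hence "reflect_upto (m + n) (f * g)
      = (\<Sum>i\<le>m. \<Sum>j\<le>n. monom (coeff f i * coeff g j) (m + n - (i + j)))"
    by (simp add: reflect_upto_sum reflect_upto_monom)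
  also have "\<dots> = (\<Sum>i\<le>m. \<Sum>j\<le>n. monom (coeff f i) (m - i) * monom (coeff g j) (n - j))"
    by (intro sum.cong refl) (auto simp: mult_monom)
  also have "\<dots> = reflect_upto m f * reflect_upto n g"
    unfolding reflect_upto_def by (simp add: sum_distrib_left sum_distrib_right sum.swap[of _ "{..n}"])
  finally show ?thesis .
qed

lemma reflect_upto_power:
  assumes "degree f \<le> n"
  shows "reflect_upto (n * k) (f ^ k) = reflect_upto n f ^ k"
proof (induct k)
  case 0
  show ?case by (rule poly_eqI) (simp add: coeff_reflect_upto)
next
  case (Suc k)
  have "degree (f ^ k) \<le> n * k"
    by (metis assms degree_power_le le_trans mult.commute mult_le_mono2)
  then have "reflect_upto (n + n * k) (f * f ^ k) = reflect_upto n f * reflect_upto (n * k) (f ^ k)"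
    by (rule reflect_upto_mult[OF assms])
  then show ?case using Suc by simp
qed

lemma pcompose_monom_monom:
  "pcompose (monom c k) (monom (1::'a::comm_semiring_1) p) = monom c (k * p)"
  by (simp add: pcompose_altdef map_poly_monom poly_monom monom_power smult_monom mult.commute)

lemma reflect_upto_pcompose_monom:
  assumes "degree f \<le> n"
  shows "reflect_upto (n * p) (pcompose f (monom 1 p))
       = pcompose (reflect_upto n f) (monom (1::'a::comm_semiring_1) p)"
proof -
  have "reflect_upto (n * p) (pcompose f (monom 1 p)) = (\<Sum>i\<le>n. monom (coeff f i) (n * p - i * p))"
    by (subst poly_as_sum_of_monoms'[OF assms, symmetric])
      (simp add: pcompose_sum pcompose_monom_monom reflect_upto_sum reflect_upto_monom)
  also have "\<dots> = (\<Sum>i\<le>n. pcompose (monom (coeff f i) (n - i)) (monom 1 p))"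
    by (intro sum.cong refl) (simp add: pcompose_monom_monom diff_mult_distrib)
  also have "\<dots> = pcompose (reflect_upto n f) (monom 1 p)"
    unfolding reflect_upto_def by (simp add: pcompose_sum)
  finally show ?thesis .
qed

section \<open>The formal derivative over an arbitrary commutative ring\<close>

text \<open>The library's \<open>pderiv\<close> needs a ring without zero divisors; \<open>W\<^sub>2(k)\<close> has them.\<close>

definition formal_deriv :: "'a::comm_semiring_1 poly \<Rightarrow> 'a poly" where
  "formal_deriv f = Poly (map (\<lambda>n. of_nat (Suc n) * coeff f (Suc n)) [0..<degree f])"

lemma coeff_formal_deriv: "coeff (formal_deriv f) n = of_nat (Suc n) * coeff f (Suc n)"
  by (cases "n < degree f") (simp_all add: formal_deriv_def nth_default_nth nth_default_beyond coeff_eq_0)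

lemma formal_deriv_eq_pderiv:
  "formal_deriv f = pderiv (f :: 'a::{comm_semiring_1,semiring_no_zero_divisors} poly)"
  by (rule poly_eqI) (simp add: coeff_formal_deriv coeff_pderiv)

lemma formal_deriv_0 [simp]: "formal_deriv 0 = 0"
  by (rule poly_eqI) (simp add: coeff_formal_deriv)

lemma formal_deriv_add: "formal_deriv (f + g) = formal_deriv f + formal_deriv g"
  by (rule poly_eqI) (simp add: coeff_formal_deriv algebra_simps)

lemma formal_deriv_diff:
  "formal_deriv (f - g) = formal_deriv f - formal_deriv (g :: 'a::comm_ring_1 poly)"
  by (rule poly_eqI) (simp add: coeff_formal_deriv algebra_simps)

lemma formal_deriv_smult: "formal_deriv (smult a f) = smult a (formal_deriv f)"
  by (rule poly_eqI) (simp add: coeff_formal_deriv algebra_simps)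

lemma formal_deriv_pCons: "formal_deriv (pCons a f) = f + pCons 0 (formal_deriv f)"
  by (rule poly_eqI) (auto simp: coeff_formal_deriv coeff_pCons algebra_simps split: nat.splits)

lemma formal_deriv_mult: "formal_deriv (f * g) = f * formal_deriv g + g * formal_deriv f"
  by (induct f) (auto simp: formal_deriv_add formal_deriv_smult formal_deriv_pCons algebra_simps)

lemma formal_deriv_power:
  "formal_deriv (f ^ n) = smult (of_nat n) (f ^ (n - 1) * formal_deriv f)"
proof (induct n)
  case (Suc n)
  then show ?case
    by (cases n) (simp_all add: formal_deriv_mult smult_add_left algebra_simps)
qed (simp add: formal_deriv_def)

lemma formal_deriv_monom: "formal_deriv (monom c n) = monom (of_nat n * c) (n - 1)"
  by (rule poly_eqI) (cases n, auto simp: coeff_formal_deriv)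

lemma formal_deriv_pcompose:
  "formal_deriv (pcompose f g) = pcompose (formal_deriv f) g * formal_deriv g"
  by (induct f rule: pCons_induct)
    (auto simp: pcompose_pCons formal_deriv_add formal_deriv_mult formal_deriv_pCons
      pcompose_add algebra_simps)

locale ring_homomorphism =
  fixes h :: "'a::comm_ring_1 \<Rightarrow> 'b::comm_ring_1"
  assumes hom_add: "h (a + b) = h a + h b"
    and hom_mult: "h (a * b) = h a * h b"
    and hom_one: "h 1 = 1"
begin

lemma hom_zero [simp]: "h 0 = 0"
  using hom_add[of 0 0] by simp

lemma hom_diff: "h (a - b) = h a - h b"
  using hom_add[of "a - b" b] by simp

lemma hom_sum: "h (sum f A) = (\<Sum>x\<in>A. h (f x))"
  by (induct A rule: infinite_finite_induct) (auto simp: hom_add)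

lemma hom_of_nat: "h (of_nat n) = of_nat n"
  by (induct n) (auto simp: hom_add hom_one)

lemma hom_power: "h (a ^ n) = h a ^ n"
  by (induct n) (auto simp: hom_mult hom_one)

lemma map_poly_add: "map_poly h (f + g) = map_poly h f + map_poly h g"
  by (rule poly_eqI) (simp add: coeff_map_poly hom_add)

lemma map_poly_diff: "map_poly h (f - g) = map_poly h f - map_poly h g"
  by (rule poly_eqI) (simp add: coeff_map_poly hom_diff)

lemma map_poly_sum: "map_poly h (sum f A) = (\<Sum>x\<in>A. map_poly h (f x))"
  by (induct A rule: infinite_finite_induct) (auto simp: map_poly_add)

lemma map_poly_mult: "map_poly h (f * g) = map_poly h f * map_poly h g"
  by (rule poly_eqI) (simp add: coeff_map_poly coeff_mult hom_sum hom_mult)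

lemma map_poly_power: "map_poly h (f ^ n) = map_poly h f ^ n"
  by (induct n) (auto simp: map_poly_mult hom_one)

lemma map_poly_formal_deriv: "map_poly h (formal_deriv f) = formal_deriv (map_poly h f)"
  by (rule poly_eqI) (simp add: coeff_map_poly coeff_formal_deriv hom_mult hom_of_nat hom_add hom_one)

lemma map_poly_pcompose_monom:
  "map_poly h (pcompose f (monom 1 k)) = pcompose (map_poly h f) (monom 1 k)"
proof -
  have "map_poly h (pcompose f (monom 1 k)) = (\<Sum>i\<le>degree f. monom (h (coeff f i)) (i * k))"
    by (subst poly_as_sum_of_monoms[symmetric])
      (simp add: pcompose_sum pcompose_monom_monom map_poly_sum map_poly_monom)
  also have "\<dots> = pcompose (map_poly h f) (monom 1 k)"
    by (subst poly_as_sum_of_monoms'[OF map_poly_degree_leq, symmetric])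
      (simp add: pcompose_sum pcompose_monom_monom coeff_map_poly)
  finally show ?thesis .
qed

end

lemma of_nat_power_CHAR:
  assumes "prime CHAR('k::comm_ring_1)"
  shows "(of_nat m :: 'k) ^ CHAR('k) = of_nat m"
proof (induct m)
  case 0
  show ?case using assms prime_gt_0_nat by (simp add: power_0_left)
next
  case (Suc m)
  have "(of_nat m + 1 :: 'k) ^ CHAR('k) = of_nat m ^ CHAR('k) + 1 ^ CHAR('k)"
    by (rule freshmans_dream[OF assms refl])
  then show ?case using Suc by (simp add: add.commute)
qed

lemma pcompose_map_power_CHAR:
  fixes f :: "'k::field poly"
  assumes "prime CHAR('k)"
  shows "pcompose (map_poly (\<lambda>c. c ^ CHAR('k)) f) (monom 1 CHAR('k)) = f ^ CHAR('k)"
proof (induct f)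
  case 0
  show ?case using assms prime_gt_0_nat by (simp add: power_0_left)
next
  case (pCons a f)
  have "pCons a f = [:a:] + monom 1 1 * f"
    by (rule poly_eqI) (auto simp: coeff_pCons coeff_monom_mult split: nat.splits)
  then have "pCons a f ^ CHAR('k) = [:a:] ^ CHAR('k) + (monom 1 1 * f) ^ CHAR('k)"
    using assms by (simp add: freshmans_dream)
  then have "pCons a f ^ CHAR('k) = [:a ^ CHAR('k):] + monom 1 CHAR('k) * f ^ CHAR('k)"
    by (simp add: power_mult_distrib monom_power poly_const_pow)
  then show ?case
    using assms prime_gt_0_nat
    by (simp add: map_poly_pCons power_0_left pcompose_pCons pCons.hyps)
qed

lemma pderiv_map_power_CHAR:
  fixes f :: "'k::field poly"
  assumes "prime CHAR('k)"
  shows "pderiv (map_poly (\<lambda>c. c ^ CHAR('k)) f) = map_poly (\<lambda>c. c ^ CHAR('k)) (pderiv f)"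
proof (rule poly_eqI)
  fix n
  have "(of_nat (Suc n) :: 'k) ^ CHAR('k) = of_nat (Suc n)"
    by (rule of_nat_power_CHAR[OF assms])
  then show "coeff (pderiv (map_poly (\<lambda>c. c ^ CHAR('k)) f)) n
      = coeff (map_poly (\<lambda>c. c ^ CHAR('k)) (pderiv f)) n"
    using assms prime_gt_0_nat
    by (simp add: coeff_pderiv coeff_map_poly power_0_left power_mult_distrib del: of_nat_Suc)
qed

section \<open>Coprimality over a field without a gcd structure\<close>

text \<open>For an arbitrary field \<open>'k\<close> the type \<open>'k poly\<close> is not an instance of \<open>semiring_gcd\<close>,
  so the library's coprimality lemmas do not apply.\<close>

lemma coprime_imp_bezout_poly:
  fixes a b :: "'k::field poly"
  assumes "coprime a b"
  shows "\<exists>s t. s * a + t * b = 1"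
  using assms
proof (induction "euclidean_size b" arbitrary: a b rule: less_induct)
  case less
  show ?case
  proof (cases "b = 0")
    case True
    with less.prems have "a dvd 1"
      by simp
    then obtain s where "1 = a * s" ..
    then show ?thesis by (metis mult.commute add_0_right mult_zero_left)
  next
    case False
    then have "coprime b (a mod b)" and "euclidean_size (a mod b) < euclidean_size b"
      using less.prems by (simp_all add: coprime_commute mod_size_less)
    then obtain s t where st: "s * b + t * (a mod b) = 1"
      using less.hyps by blast
    define q r where "q = a div b" and "r = a mod b"
    have "a = q * b + r"
      by (simp add: q_def r_def)
    then have "t * a + (s - t * q) * b = s * b + t * r"
      by (simp add: algebra_simps)
    with st show ?thesis
      unfolding r_def by metis
  qed
qed

lemma bezout_imp_coprime_poly:
  fixes a b :: "'k::field poly"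
  assumes "s * a + t * b = 1"
  shows "coprime a b"
proof (rule coprimeI)
  fix c assume "c dvd a" "c dvd b"
  then have "c dvd s * a + t * b" by simp
  with assms show "is_unit c" by simp
qed

lemma coprime_dvd_mult_poly:
  fixes a b c :: "'k::field poly"
  assumes "coprime a b" "a dvd b * c"
  shows "a dvd c"
proof -
  obtain s t where "s * a + t * b = 1" using coprime_imp_bezout_poly[OF assms(1)] by blast
  then have "c = (s * a + t * b) * c" by simp
  also have "\<dots> = s * c * a + t * (b * c)" by (simp add: algebra_simps)
  also have "a dvd \<dots>" using assms(2) by simp
  finally show ?thesis .
qed

lemma coprime_mult_left_poly:
  fixes a b c :: "'k::field poly"
  assumes "coprime a c" "coprime b c"
  shows "coprime (a * b) c"
proof -
  obtain s t where st: "s * a + t * c = 1" using coprime_imp_bezout_poly[OF assms(1)] by blast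
  obtain s' t' where st': "s' * b + t' * c = 1" using coprime_imp_bezout_poly[OF assms(2)] by blast
  have "(s * s') * (a * b) + (s * a * t' + t * s' * b + t * t' * c) * c
      = (s * a + t * c) * (s' * b + t' * c)"
    by (simp add: algebra_simps)
  with st st' show ?thesis by (metis bezout_imp_coprime_poly mult_1)
qed

lemma coprime_power_poly:
  fixes a b :: "'k::field poly"
  assumes "coprime a b"
  shows "coprime (a ^ m) (b ^ n)"
proof -
  have power_left: "coprime (x ^ k) y" if "coprime x y" for x y :: "'k poly" and k
    by (induct k) (simp_all add: that coprime_mult_left_poly)
  have "coprime (b ^ n) (a ^ m)"
    using power_left[of b "a ^ m"] power_left[OF assms] by (simp add: coprime_commute)
  then show ?thesis by (simp add: coprime_commute)
qed

section \<open>Lifting Frobenius over \<open>W\<^sub>2(k)\<close>\<close>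

locale truncated_witt =
  fixes p :: nat and \<pi> :: "'w::comm_ring_1 \<Rightarrow> 'k::field" and \<sigma> :: "'w \<Rightarrow> 'w"
    and mp :: "'k \<Rightarrow> 'w"
  assumes W2: "is_W2 p \<pi> \<sigma> mp" and CHAR_k: "CHAR('k) = p" and prime_p: "prime p"
begin

lemma pi_add: "\<pi> (a + b) = \<pi> a + \<pi> b" and pi_mult: "\<pi> (a * b) = \<pi> a * \<pi> b"
  and pi_one: "\<pi> 1 = 1" and pi_surj: "surj \<pi>"
  and p_torsion: "of_nat p * a = 0 \<longleftrightarrow> \<pi> a = 0"
  and sigma_add: "\<sigma> (a + b) = \<sigma> a + \<sigma> b" and sigma_mult: "\<sigma> (a * b) = \<sigma> a * \<sigma> b"
  and sigma_one: "\<sigma> 1 = 1" and pi_sigma: "\<pi> (\<sigma> a) = \<pi> a ^ p"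
  and mp_pi: "mp (\<pi> a) = of_nat p * a"
  using W2 unfolding is_W2_def by blast+

lemma prime_CHAR: "prime CHAR('k)"
  using prime_p CHAR_k by simp

sublocale pi: ring_homomorphism \<pi>
  by unfold_locales (simp_all add: pi_add pi_mult pi_one)

sublocale sigma: ring_homomorphism \<sigma>
  by unfold_locales (simp_all add: sigma_add sigma_mult sigma_one)

lemma pi_of_p_mult_eq_mp: "of_nat p * b = mp c \<Longrightarrow> \<pi> b = c"
proof -
  assume eq: "of_nat p * b = mp c"
  obtain a where a: "c = \<pi> a" using surjD[OF pi_surj] by blast
  with eq have "of_nat p * (b - a) = 0" by (simp add: mp_pi algebra_simps)
  then show "\<pi> b = c" by (simp add: p_torsion pi.hom_diff a)
qed

lemma mp_inj: "mp c = mp d \<Longrightarrow> c = d"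
proof -
  assume eq: "mp c = mp d"
  obtain b where b: "d = \<pi> b" using surjD[OF pi_surj] by blast
  with eq have "of_nat p * b = mp c" by (simp add: mp_pi)
  with b show "c = d" by (simp add: pi_of_p_mult_eq_mp)
qed

lemma mp_zero [simp]: "mp 0 = 0"
  using mp_pi[of 0] by simp

lemma mp_of_nat_mult: "mp (of_nat n * c) = of_nat n * mp c"
proof -
  obtain a where a: "c = \<pi> a" using surjD[OF pi_surj] by blast
  then have "of_nat n * c = \<pi> (of_nat n * a)" by (simp add: pi.hom_mult pi.hom_of_nat)
  then show ?thesis by (simp add: a mp_pi mult.left_commute)
qed

lemma map_poly_mp_inj:
  assumes "map_poly mp F = map_poly mp G"
  shows "F = G"
proof (rule poly_eqI)
  fix n
  from assms have "mp (coeff F n) = mp (coeff G n)"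
    by (metis coeff_map_poly mp_zero)
  then show "coeff F n = coeff G n"
    by (rule mp_inj)
qed

lemma degree_map_poly_mp: "degree (map_poly mp F) = degree F"
  by (rule degree_map_poly) (use mp_inj[of _ 0] in auto)

text \<open>Differentiating \<open>A\<^sup>p - A\<^sup>\<sigma>(T\<^sup>p) = p\<cdot>F\<close> over \<open>W\<^sub>2(k)\<close> gives \<open>p\<close> times an
  explicit polynomial; dividing by \<open>p\<close> and reducing mod \<open>p\<close> determines \<open>F'\<close>.\<close>

lemma pderiv_frobenius_defect:
  fixes A :: "'w poly" and F :: "'k poly"
  assumes defect: "A ^ p - pcompose (map_poly \<sigma> A) (monom 1 p) = map_poly mp F"
  defines "Ab \<equiv> map_poly \<pi> A"
  shows "pderiv F = Ab ^ (p - 1) * pderiv Ab - pderiv Ab ^ p * monom 1 (p - 1)"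
proof -
  define B where "B = A ^ (p - 1) * formal_deriv A
      - pcompose (formal_deriv (map_poly \<sigma> A)) (monom 1 p) * monom 1 (p - 1)"
  have "formal_deriv (monom 1 p) = smult (of_nat p) (monom (1::'w) (p - 1))"
    by (simp add: formal_deriv_monom smult_monom)
  then have "formal_deriv (A ^ p - pcompose (map_poly \<sigma> A) (monom 1 p)) = smult (of_nat p) B"
    by (simp add: B_def formal_deriv_diff formal_deriv_power formal_deriv_pcompose
        algebra_simps smult_diff_right)
  moreover have "formal_deriv (map_poly mp F) = map_poly mp (pderiv F)"
    by (rule poly_eqI) (simp add: coeff_map_poly coeff_pderiv coeff_formal_deriv mp_of_nat_mult
        del: of_nat_Suc)
  ultimately have p_B: "smult (of_nat p) B = map_poly mp (pderiv F)"
    using defect by simp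
  have "of_nat p * coeff B j = mp (coeff (pderiv F) j)" for j
    using arg_cong[OF p_B, of "\<lambda>q. coeff q j"] by (simp add: coeff_map_poly)
  then have piB: "map_poly \<pi> B = pderiv F"
    by (intro poly_eqI) (simp add: coeff_map_poly pi_of_p_mult_eq_mp)
  have "map_poly \<pi> (formal_deriv (map_poly \<sigma> A)) = pderiv (map_poly (\<lambda>c. c ^ p) Ab)"
    using prime_gt_0_nat[OF prime_p]
    by (simp add: Ab_def pi.map_poly_formal_deriv formal_deriv_eq_pderiv map_poly_map_poly
        o_def pi_sigma power_0_left)
  also have "\<dots> = map_poly (\<lambda>c. c ^ p) (pderiv Ab)"
    using pderiv_map_power_CHAR[OF prime_CHAR] unfolding CHAR_k .
  finally have "pcompose (map_poly \<pi> (formal_deriv (map_poly \<sigma> A))) (monom 1 p) = pderiv Ab ^ p"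
    using pcompose_map_power_CHAR[OF prime_CHAR] unfolding CHAR_k by simp
  with piB show ?thesis
    unfolding B_def pi.map_poly_diff pi.map_poly_mult pi.map_poly_power pi.map_poly_pcompose_monom
    by (simp add: map_poly_monom pi_one Ab_def pi.map_poly_formal_deriv formal_deriv_eq_pderiv)
qed

lemma frobenius_lift_dvd:
  fixes A :: "'w poly" and u \<alpha> :: "'k poly"
  defines "Ab \<equiv> map_poly \<pi> A"
  assumes separable: "coprime Ab (pderiv Ab)"
    and defect: "A ^ p - pcompose (map_poly \<sigma> A) (monom 1 p)
                   = map_poly mp (pderiv Ab ^ p * u - 2 * \<alpha> * Ab ^ p)"
  shows "Ab ^ (p - 1) dvd monom 1 (p - 1) + pderiv u"
proof -
  have "(of_nat p :: 'k) = 0"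
    using CHAR_k of_nat_CHAR[where 'a='k] by simp
  then have "pderiv (pderiv Ab ^ p * u - 2 * \<alpha> * Ab ^ p)
      = pderiv Ab ^ p * pderiv u - 2 * pderiv \<alpha> * Ab ^ p"
    by (simp add: pderiv_diff pderiv_mult pderiv_power)
  then have "pderiv Ab ^ p * pderiv u - 2 * pderiv \<alpha> * Ab ^ p
      = Ab ^ (p - 1) * pderiv Ab - pderiv Ab ^ p * monom 1 (p - 1)"
    using pderiv_frobenius_defect[OF defect] unfolding Ab_def by simp
  moreover have "Ab ^ p = Ab ^ (p - 1) * Ab"
    using prime_gt_0_nat[OF prime_p] by (simp add: power_eq_if)
  then have "pderiv Ab ^ p * (monom 1 (p - 1) + pderiv u) - Ab ^ (p - 1) * (pderiv Ab + 2 * pderiv \<alpha> * Ab)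
      = (pderiv Ab ^ p * pderiv u - 2 * pderiv \<alpha> * Ab ^ p)
        - (Ab ^ (p - 1) * pderiv Ab - pderiv Ab ^ p * monom 1 (p - 1))"
    by (simp add: algebra_simps)
  ultimately have "pderiv Ab ^ p * (monom 1 (p - 1) + pderiv u)
      = Ab ^ (p - 1) * (pderiv Ab + 2 * pderiv \<alpha> * Ab)"
    by simp
  then have "Ab ^ (p - 1) dvd pderiv Ab ^ p * (monom 1 (p - 1) + pderiv u)"
    by simp
  then show ?thesis
    by (rule coprime_dvd_mult_poly[OF coprime_power_poly[OF separable]])
qed

lemma reflect_upto_frobenius_defect:
  assumes "degree A \<le> n"
  shows "reflect_upto (n * p) (A ^ p - pcompose (map_poly \<sigma> A) (monom 1 p))
       = reflect_upto n A ^ p - pcompose (map_poly \<sigma> (reflect_upto n A)) (monom 1 p)"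
proof -
  have "degree (map_poly \<sigma> A) \<le> n"
    using map_poly_degree_leq[of \<sigma> A] assms by linarith
  then show ?thesis
    by (simp add: reflect_upto_diff reflect_upto_power[OF assms] reflect_upto_pcompose_monom
        reflect_upto_map_poly)
qed

lemma frobenius_defect_reflect_upto:
  assumes deg: "degree A \<le> n"
    and defect: "A ^ p - pcompose (map_poly \<sigma> A) (monom 1 p) = map_poly mp F"
    and defect_reflected: "reflect_upto n A ^ p - pcompose (map_poly \<sigma> (reflect_upto n A)) (monom 1 p)
                             = map_poly mp G"
  shows "G = reflect_upto (n * p) F" and "degree F \<le> n * p"
proof -
  show "G = reflect_upto (n * p) F"
    using reflect_upto_frobenius_defect[OF deg] defect defect_reflected
    by (intro map_poly_mp_inj) (simp add: reflect_upto_map_poly)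
  have "degree (map_poly \<sigma> A) \<le> n"
    using map_poly_degree_leq[of \<sigma> A] deg by linarith
  then have "degree (pcompose (map_poly \<sigma> A) (monom (1::'w) p)) \<le> n * p"
    using degree_pcompose_le[of "map_poly \<sigma> A" "monom (1::'w) p"] degree_monom_le[of "1::'w" p]
    by (meson le_trans mult_le_mono)
  moreover have "degree (A ^ p) \<le> n * p"
    using degree_power_le[of A p] deg by (meson le_trans mult_le_mono1)
  ultimately show "degree F \<le> n * p"
    using degree_diff_le_max[of "A ^ p" "pcompose (map_poly \<sigma> A) (monom 1 p)"] defect
    by (simp add: degree_map_poly_mp)
qed

end

section \<open>The derivation \<open>d/dx\<close> of \<open>k(x)\<close>\<close>

text \<open>\<open>rf_deriv\<close> is defined through an arbitrary representative of the fraction; the quotient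
  rule gives the same value for all of them.\<close>

lemma rf_deriv_Fract:
  fixes n m :: "'k::field poly"
  assumes m: "m \<noteq> 0"
  shows "rf_deriv (Fract n m) = Fract (pderiv n * m - n * pderiv m) (m * m)"
proof -
  define Rep where "Rep D \<longleftrightarrow> (\<exists>n' m'. m' \<noteq> 0 \<and> Fract n m = Fract n' m' \<and>
                     D = Fract (pderiv n' * m' - n' * pderiv m') (m' * m'))" for D
  have "Rep (Fract (pderiv n * m - n * pderiv m) (m * m))"
    unfolding Rep_def using m by blast
  then have "Rep (rf_deriv (Fract n m))"
    unfolding rf_deriv_def Rep_def[symmetric] by (rule someI)
  then obtain n' m' where m': "m' \<noteq> 0" and "Fract n m = Fract n' m'"
    and D: "rf_deriv (Fract n m) = Fract (pderiv n' * m' - n' * pderiv m') (m' * m')"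
    unfolding Rep_def by blast
  then have eq: "n * m' = n' * m"
    using m by (simp add: eq_fract)
  from eq have eq': "pderiv n * m' + n * pderiv m' = pderiv n' * m + n' * pderiv m"
    by (metis pderiv_mult mult.commute)
  have "(pderiv n' * m' - n' * pderiv m') * (m * m)
      = m' * m * (pderiv n' * m) - (n' * m) * m * pderiv m'"
    by (simp add: algebra_simps)
  also have "\<dots> = m' * m * (pderiv n * m' + n * pderiv m' - n' * pderiv m) - (n * m') * m * pderiv m'"
    using eq eq' by (simp add: algebra_simps)
  also have "\<dots> = (pderiv n * m - n * pderiv m) * (m' * m')"
    using eq by (simp add: algebra_simps) (metis (no_types, lifting) mult.assoc mult.commute)
  finally show ?thesis
    using D m m' by (simp add: eq_fract)
qed

lemma to_fract_quotient_cases: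
  obtains n m :: "'k::field poly" where "m \<noteq> 0" "z = to_fract n / to_fract m"
  by (cases z) (auto simp: Fract_conv_to_fract)

lemma rf_deriv_to_fract_divide:
  fixes n m :: "'k::field poly"
  assumes "m \<noteq> 0"
  shows "rf_deriv (to_fract n / to_fract m) =
     (to_fract (pderiv n) * to_fract m - to_fract n * to_fract (pderiv m)) / (to_fract m * to_fract m)"
  using rf_deriv_Fract[OF assms, of n] assms by (simp add: Fract_conv_to_fract)

lemma rf_deriv_to_fract [simp]: "rf_deriv (to_fract (n :: 'k::field poly)) = to_fract (pderiv n)"
  using rf_deriv_to_fract_divide[of 1 n] by simp

lemma pderiv_x [simp]: "pderiv [:0, 1 :: 'a::{comm_semiring_1,semiring_no_zero_divisors}:] = 1"
  by (simp add: pderiv_pCons one_pCons[symmetric])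

lemma rf_deriv_0 [simp]: "rf_deriv (0 :: 'k::field rf) = 0"
  using rf_deriv_to_fract[of 0] by simp

lemma rf_deriv_1 [simp]: "rf_deriv (1 :: 'k::field rf) = 0"
  using rf_deriv_to_fract[of 1] by simp

lemma rf_deriv_add: "rf_deriv (z + w :: 'k::field rf) = rf_deriv z + rf_deriv w"
proof -
  obtain a b c d where bd: "b \<noteq> 0" "d \<noteq> 0"
    and zw: "z = to_fract a / to_fract b" "w = to_fract c / to_fract d"
    by (metis to_fract_quotient_cases)
  then have "z + w = to_fract (a * d + c * b) / to_fract (b * d)"
    by (simp add: field_simps)
  then have "rf_deriv (z + w) = rf_deriv (to_fract (a * d + c * b) / to_fract (b * d))"
    by (rule arg_cong)
  also have "\<dots> = (to_fract (pderiv (a * d + c * b)) * to_fract (b * d)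
      - to_fract (a * d + c * b) * to_fract (pderiv (b * d))) / (to_fract (b * d) * to_fract (b * d))"
    using bd by (intro rf_deriv_to_fract_divide) simp
  finally have sum: "rf_deriv (z + w) = \<dots>" .
  show ?thesis
    unfolding sum using bd by (simp add: zw rf_deriv_to_fract_divide pderiv_add pderiv_mult field_simps)
qed

lemma rf_deriv_mult: "rf_deriv (z * w :: 'k::field rf) = rf_deriv z * w + z * rf_deriv w"
proof -
  obtain a b c d where bd: "b \<noteq> 0" "d \<noteq> 0"
    and zw: "z = to_fract a / to_fract b" "w = to_fract c / to_fract d"
    by (metis to_fract_quotient_cases)
  then have "z * w = to_fract (a * c) / to_fract (b * d)"
    by simp
  then have "rf_deriv (z * w) = rf_deriv (to_fract (a * c) / to_fract (b * d))"
    by (rule arg_cong)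
  also have "\<dots> = (to_fract (pderiv (a * c)) * to_fract (b * d)
      - to_fract (a * c) * to_fract (pderiv (b * d))) / (to_fract (b * d) * to_fract (b * d))"
    using bd by (intro rf_deriv_to_fract_divide) simp
  finally have prod: "rf_deriv (z * w) = \<dots>" .
  show ?thesis
    unfolding prod using bd by (simp add: zw rf_deriv_to_fract_divide pderiv_mult field_simps)
qed

lemma rf_deriv_inverse: "rf_deriv (inverse z :: 'k::field rf) = - rf_deriv z / (z * z)"
proof (cases "z = 0")
  case False
  obtain a b where "b \<noteq> 0" and z: "z = to_fract a / to_fract b"
    by (rule to_fract_quotient_cases)
  with False have "inverse z = to_fract b / to_fract a" "a \<noteq> 0"
    by auto
  with \<open>b \<noteq> 0\<close> show ?thesis
    by (simp add: z rf_deriv_to_fract_divide field_simps)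
qed simp

lemma rf_deriv_power: "rf_deriv (z ^ n :: 'k::field rf) = of_nat n * z ^ (n - 1) * rf_deriv z"
proof (induct n)
  case (Suc n)
  then show ?case by (cases n) (simp_all add: rf_deriv_mult algebra_simps)
qed simp

definition rf_const :: "'k::field \<Rightarrow> 'k rf" where
  "rf_const c = to_fract [:c:]"

definition rf_eval :: "'k::field poly \<Rightarrow> 'k rf \<Rightarrow> 'k rf" where
  "rf_eval q z = poly (map_poly rf_const q) z"

abbreviation rf_x :: "'k::field rf" where
  "rf_x \<equiv> to_fract [:0, 1:]"

abbreviation rf_x1 :: "'k::field rf" where
  "rf_x1 \<equiv> inverse rf_x"

interpretation rf_const: ring_homomorphism rf_const
  by unfold_locales (simp_all add: rf_const_def one_pCons[symmetric] flip: to_fract_add to_fract_mult)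

lemma rf_const_1 [simp]: "rf_const 1 = 1"
  by (simp add: rf_const_def one_pCons[symmetric])

lemma rf_deriv_rf_const [simp]: "rf_deriv (rf_const c) = 0"
  by (simp add: rf_const_def)

lemma of_nat_rf: "(of_nat n :: 'k::field rf) = rf_const (of_nat n)"
  by (simp add: rf_const_def of_nat_poly[symmetric] of_nat_fract Fract_conv_to_fract)

lemma CHAR_rf: "CHAR('k::field rf) = CHAR('k)"
  by (rule CHAR_eqI) (auto simp: of_nat_rf rf_const_def of_nat_eq_0_iff_char_dvd)

lemma to_fract_power: "to_fract (q ^ n) = to_fract q ^ n"
  by (induct n) auto

lemma to_fract_smult: "to_fract (smult c q) = rf_const c * to_fract (q :: 'k::field poly)"
  by (simp add: rf_const_def flip: to_fract_mult)

lemma to_fract_monom: "to_fract (monom c n) = rf_const c * rf_x ^ n"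
  by (simp add: monom_altdef to_fract_power to_fract_smult)

lemma to_fract_numeral [simp]: "to_fract (numeral n :: 'a::idom) = numeral n"
proof -
  have "to_fract (of_nat m :: 'a) = of_nat m" for m
    by (induct m) simp_all
  from this[of "numeral n"] show ?thesis by simp
qed

lemma rf_diff_power_CHAR:
  assumes "prime CHAR('k::field)" "odd CHAR('k)"
  shows "(a - b :: 'k rf) ^ CHAR('k) = a ^ CHAR('k) - b ^ CHAR('k)"
proof -
  have "(a + - b) ^ CHAR('k rf) = a ^ CHAR('k rf) + (- b) ^ CHAR('k rf)"
    by (rule freshmans_dream) (use assms in \<open>simp_all add: CHAR_rf\<close>)
  then show ?thesis
    using assms(2) by (simp add: CHAR_rf)
qed

lemma rf_eval_add: "rf_eval (f + g) z = rf_eval f z + rf_eval g z"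
  and rf_eval_diff: "rf_eval (f - g) z = rf_eval f z - rf_eval g z"
  and rf_eval_mult: "rf_eval (f * g) z = rf_eval f z * rf_eval g z"
  and rf_eval_power: "rf_eval (f ^ n) z = rf_eval f z ^ n"
  and rf_eval_monom: "rf_eval (monom c n) z = rf_const c * z ^ n"
  and rf_eval_pCons: "rf_eval (pCons c f) z = rf_const c + z * rf_eval f z"
  and rf_eval_sum: "rf_eval (sum h A) z = (\<Sum>a\<in>A. rf_eval (h a) z)"
  by (simp_all add: rf_eval_def rf_const.map_poly_add rf_const.map_poly_diff rf_const.map_poly_mult
      rf_const.map_poly_power map_poly_monom poly_monom map_poly_pCons rf_const.map_poly_sum poly_sum)

lemma rf_eval_0 [simp]: "rf_eval 0 z = 0"
  and rf_eval_1 [simp]: "rf_eval 1 z = 1"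
  by (simp_all add: rf_eval_def)

lemma rf_eval_numeral [simp]: "rf_eval (numeral n) z = numeral n"
proof -
  have "rf_eval (of_nat m) z = of_nat m" for m
    by (induct m) (simp_all add: rf_eval_add)
  from this[of "numeral n"] show ?thesis by simp
qed

lemma rf_eval_rf_x [simp]: "rf_eval q rf_x = to_fract q"
proof (induct q)
  case (pCons a q)
  have "pCons a q = [:a:] + [:0, 1:] * q"
    by simp
  then have "to_fract (pCons a q) = to_fract [:a:] + rf_x * to_fract q"
    by (metis to_fract_add to_fract_mult)
  with pCons show ?case by (simp add: rf_eval_pCons rf_const_def)
qed simp

lemma rf_deriv_rf_eval: "rf_deriv (rf_eval q z) = rf_eval (pderiv q) z * rf_deriv z"
  by (induct q) (simp_all add: rf_eval_pCons rf_deriv_add rf_deriv_mult pderiv_pCons rf_eval_add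
      algebra_simps)

lemma rf_eval_as_sum:
  assumes "degree f \<le> n"
  shows "rf_eval f z = (\<Sum>k\<le>n. rf_const (coeff f k) * z ^ k)"
proof -
  have "rf_eval f z = rf_eval (\<Sum>k\<le>n. monom (coeff f k) k) z"
    by (simp add: poly_as_sum_of_monoms'[OF assms])
  then show ?thesis by (simp add: rf_eval_sum rf_eval_monom)
qed

lemma rf_eval_reflect_upto:
  assumes "degree f \<le> n" "z \<noteq> 0"
  shows "rf_eval (reflect_upto n f) z = z ^ n * rf_eval f (inverse z)"
proof -
  have "rf_eval (reflect_upto n f) z = (\<Sum>k\<le>n. rf_const (coeff f k) * z ^ (n - k))"
    by (simp add: reflect_upto_def rf_eval_sum rf_eval_monom)
  also have "\<dots> = (\<Sum>k\<le>n. z ^ n * (rf_const (coeff f k) * inverse z ^ k))"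
  proof (intro sum.cong refl)
    fix k assume "k \<in> {..n}"
    then have "z ^ n = z ^ (n - k) * z ^ k" by (simp flip: power_add)
    with assms(2) show "rf_const (coeff f k) * z ^ (n - k) = z ^ n * (rf_const (coeff f k) * inverse z ^ k)"
      by (simp add: field_simps)
  qed
  also have "\<dots> = z ^ n * rf_eval f (inverse z)"
    by (simp add: rf_eval_as_sum[OF assms(1)] sum_distrib_left)
  finally show ?thesis .
qed

lemma rf_eval_rf_x1:
  assumes "degree f \<le> n"
  shows "rf_eval f rf_x1 = rf_x1 ^ n * to_fract (reflect_upto n f)"
proof -
  have "to_fract (reflect_upto n f) = rf_x ^ n * rf_eval f rf_x1"
    using rf_eval_reflect_upto[OF assms, of rf_x] by simp
  then show ?thesis by (simp add: field_simps)
qed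

lemma rf_deriv_rf_x1: "rf_deriv (rf_x1 :: 'k::field rf) = - (rf_x1 ^ 2)"
  by (simp only: rf_deriv_inverse) (simp add: power2_eq_square field_simps)

lemma rf_deriv_rf_x1_power: "rf_deriv (rf_x1 ^ n :: 'k::field rf) = - of_nat n * rf_x1 ^ Suc n"
  by (induct n) (simp_all add: rf_deriv_mult rf_deriv_rf_x1 algebra_simps power2_eq_square)

text \<open>Differentiating \<open>f(1/x) = x\<^sup>-\<^sup>n g(x)\<close>, where \<open>g\<close> is the reflection of \<open>f\<close>.\<close>

lemma rf_eval_pderiv_rf_x1:
  assumes "degree f \<le> n"
  defines "g \<equiv> reflect_upto n f"
  shows "rf_eval (pderiv f) rf_x1
       = rf_x1 ^ n * (of_nat n * rf_x * to_fract g - rf_x ^ 2 * to_fract (pderiv g))"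
proof -
  have "rf_deriv (rf_eval f rf_x1) = rf_eval (pderiv f) rf_x1 * rf_deriv rf_x1"
    by (rule rf_deriv_rf_eval)
  then have "rf_eval (pderiv f) rf_x1 * rf_x1 ^ 2
      = of_nat n * rf_x1 ^ Suc n * to_fract g - rf_x1 ^ n * to_fract (pderiv g)"
    unfolding rf_eval_rf_x1[OF assms(1)] g_def[symmetric]
    by (simp add: rf_deriv_mult rf_deriv_rf_x1_power rf_deriv_rf_x1 algebra_simps)
  then show ?thesis
    by (simp add: field_simps power2_eq_square)
qed

lemma rf_deriv_power_CHAR:
  "CHAR('k) dvd n \<Longrightarrow> rf_deriv (z ^ n :: 'k::field rf) = 0"
  by (simp add: rf_deriv_power of_nat_eq_0_iff_char_dvd CHAR_rf)

section \<open>Separability of the reflected polynomial\<close>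

lemma coprime_monom_poly:
  fixes q :: "'k::field poly"
  assumes "coeff q 0 \<noteq> 0"
  shows "coprime (monom 1 n) q"
proof -
  obtain s where q: "q = pCons (coeff q 0) s"
    by (metis coeff_pCons_0 pCons_cases)
  have "smult (inverse (coeff q 0)) q - smult (inverse (coeff q 0)) s * monom 1 1 = 1"
    using assms by (subst (1 2) q) (simp add: monom_Suc smult_add_right algebra_simps)
  then have "coprime (monom (1::'k) 1) q"
    by (intro bezout_imp_coprime_poly[of "- smult (inverse (coeff q 0)) s" _ "[:inverse (coeff q 0):]"])
      (simp add: algebra_simps)
  then show ?thesis
    using coprime_power_poly[of "monom (1::'k) 1" q n 1] by (simp add: monom_power)
qed

text \<open>A Bezout relation \<open>a f + b f' = 1\<close> evaluated at \<open>1/x\<close> becomes, after clearing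
  denominators, \<open>x\<^sup>N = A g + B (n x g - x\<^sup>2 g')\<close>; since \<open>g'(0) \<noteq> 0\<close>, every common
  divisor of \<open>g\<close> and \<open>g'\<close> is a unit.\<close>

lemma coprime_pderiv_reflect_upto:
  fixes f :: "'k::field poly"
  assumes separable: "coprime f (pderiv f)" and deg: "degree f = n"
  defines "g \<equiv> reflect_upto (Suc n) f"
  shows "coprime g (pderiv g)"
proof -
  obtain a b where ab: "a * f + b * pderiv f = 1"
    using coprime_imp_bezout_poly[OF separable] by blast
  define m where "m = max (degree a) (degree b)"
  define N where "N = m + Suc n"
  have degs: "degree a \<le> m" "degree b \<le> m" "degree f \<le> Suc n"
    by (simp_all add: m_def deg)
  have "1 = rf_eval a rf_x1 * rf_eval f rf_x1 + rf_eval b rf_x1 * rf_eval (pderiv f) rf_x1"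
    using arg_cong[OF ab, of "\<lambda>q. rf_eval q rf_x1"] by (simp add: rf_eval_add rf_eval_mult)
  also have "\<dots> = rf_x1 ^ N * to_fract (reflect_upto m a * g + reflect_upto m b
      * (smult (of_nat (Suc n)) (monom 1 1 * g) - monom 1 2 * pderiv g))"
    unfolding rf_eval_rf_x1[OF degs(1)] rf_eval_rf_x1[OF degs(2)] rf_eval_rf_x1[OF degs(3)]
      rf_eval_pderiv_rf_x1[OF degs(3)] g_def[symmetric]
    by (simp add: N_def to_fract_smult to_fract_monom rf_const.hom_of_nat power_add algebra_simps
        del: of_nat_Suc)
  finally have "to_fract (monom 1 N) = to_fract (reflect_upto m a * g + reflect_upto m b
      * (smult (of_nat (Suc n)) (monom 1 1 * g) - monom 1 2 * pderiv g))"
    by (simp add: to_fract_monom field_simps)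
  then have "monom 1 N = reflect_upto m a * g + reflect_upto m b
      * (smult (of_nat (Suc n)) (monom 1 1 * g) - monom 1 2 * pderiv g)"
    by (simp only: to_fract_eq_iff)
  then have common: "c dvd monom 1 N" if "c dvd g" "c dvd pderiv g" for c
    using that by (metis dvd_add dvd_diff dvd_mult dvd_smult)
  have "coeff (pderiv g) 0 = lead_coeff f"
    by (simp add: coeff_pderiv g_def coeff_reflect_upto deg)
  moreover have "f \<noteq> 0"
    using separable by auto
  ultimately have "coprime (monom 1 N) (pderiv g)"
    by (simp add: coprime_monom_poly)
  then show ?thesis
    using common by (meson coprimeI coprime_common_divisor)
qed

section \<open>Computing in the function field \<open>K\<close>\<close>

text \<open>Elements \<open>(a, 0)\<close> lie in \<open>k(x)\<close>, elements \<open>(0, b)\<close> in \<open>y\<cdot>k(x)\<close>; all functions and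
  differentials of the theorem are of one of these two shapes.\<close>

context
  fixes Pb :: "'k::field poly"
begin

lemma hf_mult_shapes:
  "hf_mult Pb (a, 0) (b, 0) = (a * b, 0)"
  "hf_mult Pb (a, 0) (0, b) = (0, a * b)"
  "hf_mult Pb (0, a) (b, 0) = (0, a * b)"
  "hf_mult Pb (0, a) (0, b) = (a * b * to_fract Pb, 0)"
  by (simp_all add: hf_mult_def)

lemma hf_pow_base: "hf_pow Pb (a, 0) n = (a ^ n, 0)"
  by (induct n) (simp_all add: hf_pow_def hf_one_def hf_mult_def)

lemma hf_pow_Suc: "hf_pow Pb z (Suc n) = hf_mult Pb z (hf_pow Pb z n)"
  by (simp add: hf_pow_def)

lemma hf_pow_y_even: "hf_pow Pb (0, b) (2 * n) = ((b * b * to_fract Pb) ^ n, 0)"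
proof (induct n)
  case (Suc n)
  have "hf_pow Pb (0, b) (2 * Suc n) = hf_mult Pb (0, b) (hf_mult Pb (0, b) (hf_pow Pb (0, b) (2 * n)))"
    by (simp only: mult_Suc_right add_2_eq_Suc hf_pow_Suc)
  with Suc show ?case
    by (simp add: hf_mult_def algebra_simps)
qed (simp add: hf_pow_def hf_one_def)

lemma hf_pow_y_odd: "hf_pow Pb (0, b) (Suc (2 * n)) = (0, b * (b * b * to_fract Pb) ^ n)"
  by (simp only: hf_pow_Suc hf_pow_y_even) (simp add: hf_mult_def)

lemma hf_inv_base: "hf_inv Pb (a, 0) = (inverse a, 0)"
  by (simp add: hf_inv_def Let_def field_simps)

lemma hf_inv_y: "hf_inv Pb (0, b) = (0, inverse (b * to_fract Pb))"
  by (cases "b * to_fract Pb = 0") (auto simp: hf_inv_def Let_def field_simps)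

lemma hf_poly_base: "hf_poly Pb q (a, 0) = (rf_eval q a, 0)"
proof -
  have "foldr (\<lambda>i acc. hf_add (hf_mult Pb (hf_const (coeff q i)) (hf_pow Pb (a, 0) i)) acc) xs (0, 0)
        = (\<Sum>i\<leftarrow>xs. rf_const (coeff q i) * a ^ i, 0)" for xs
    by (induct xs) (simp_all add: hf_add_def hf_mult_def hf_const_def hf_pow_base rf_const_def)
  moreover have "rf_eval q a = (\<Sum>i\<leftarrow>[0..<Suc (degree q)]. rf_const (coeff q i) * a ^ i)"
    by (simp add: rf_eval_as_sum[of q "degree q"] sum_list_distinct_conv_sum_set atLeast0AtMost
        lessThan_Suc_atMost atLeast0LessThan del: upt_Suc)
  ultimately show ?thesis
    unfolding hf_poly_def by simp
qed

lemma hf_d_base: "hf_d Pb (a, 0) = (rf_deriv a, 0)"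
  and hf_d_y: "hf_d Pb (0, b) = (0, rf_deriv b + b * to_fract (pderiv Pb) / (2 * to_fract Pb))"
  by (simp_all add: hf_d_def)

lemma hf_x_eq: "hf_x = (rf_x, 0)" and hf_y_eq: "hf_y = (0, 1)"
  by (simp_all add: hf_x_def hf_y_def)

lemma hf_x1_eq: "hf_x1 Pb = (rf_x1, 0)"
  by (simp add: hf_x1_def hf_x_def hf_inv_base)

lemma hf_t_eq: "hf_t Pb g = (0, rf_x1 ^ (g + 1))"
  by (simp add: hf_t_def hf_x1_eq hf_pow_base hf_y_def hf_mult_def)

text \<open>In characteristic \<open>p = 2r + 1\<close> the function \<open>y\<^sup>-\<^sup>p = y / P\<^sup>r\<^sup>+\<^sup>1\<close> is a \<open>p\<close>-th power,
  hence closed: \<open>d(c y\<^sup>-\<^sup>p) = (dc/dx) y\<^sup>-\<^sup>p dx\<close>.\<close>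

lemma hf_d_div_y_power:
  assumes "CHAR('k) = Suc (2 * r)"
  shows "hf_d Pb (0, c / to_fract Pb ^ Suc r) = (0, rf_deriv c / to_fract Pb ^ Suc r)"
proof (cases "Pb = 0")
  case False
  define P P' where "P = to_fract Pb" and "P' = to_fract (pderiv Pb)"
  have "CHAR('k rf) = Suc (2 * r)"
    using assms by (simp add: CHAR_rf)
  then have "(of_nat (Suc (2 * r)) :: 'k rf) = 0"
    by (metis of_nat_CHAR)
  then have "2 * of_nat (Suc r) = (1 :: 'k rf)"
    by (simp add: algebra_simps)
  then have half: "(of_nat (Suc r) :: 'k rf) = 1 / 2" and two: "(2 :: 'k rf) \<noteq> 0"
    by (auto simp: field_simps)
  have P: "P \<noteq> 0"
    using False by (simp add: P_def)
  have dQ: "rf_deriv (P ^ Suc r) = 1 / 2 * P ^ r * P'"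
    by (simp only: rf_deriv_power half diff_Suc_1) (simp add: P_def P'_def)
  have "rf_deriv (c / P ^ Suc r)
      = rf_deriv c / P ^ Suc r - c * (1 / 2 * P ^ r * P') / (P ^ Suc r * P ^ Suc r)"
    unfolding divide_inverse rf_deriv_mult rf_deriv_inverse dQ by (simp add: algebra_simps)
  also have "\<dots> = rf_deriv c / P ^ Suc r - c / P ^ Suc r * P' / (2 * P)"
    using P two by (simp add: field_simps)
  finally show ?thesis
    by (simp add: hf_d_y P_def P'_def)
qed (simp add: hf_d_def)

end

lemma poly_y_mem_Omega_U: "(0, to_fract c) \<in> Omega_U (Pb :: 'k::field poly)"
proof -
  have "(0, to_fract c) = hf_add (hf_mult Pb (to_fract 0, to_fract c) (hf_d Pb hf_x))
            (hf_mult Pb (to_fract 0, to_fract 0) (hf_d Pb hf_y))"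
    by (simp add: hf_x_eq hf_d_base hf_add_def hf_mult_def)
  moreover have "(to_fract 0, to_fract c) \<in> O_U Pb" "(to_fract 0, to_fract (0::'k poly)) \<in> O_U Pb"
    unfolding O_U_def by blast+
  ultimately show ?thesis
    unfolding Omega_U_def by blast
qed

text \<open>\<open>(0, B(x\<^sub>1) x\<^sub>1\<^sup>g\<^sup>+\<^sup>3)\<close> is the differential \<open>-B(x\<^sub>1) t dx\<^sub>1\<close>, as \<open>dx\<^sub>1 = -x\<^sub>1\<^sup>2 dx\<close>.\<close>

lemma poly_t_mem_Omega_V:
  "(0, rf_eval B rf_x1 * rf_x1 ^ (g + 3)) \<in> Omega_V (Pb :: 'k::field poly) g"
proof -
  define a where "a = hf_add (hf_poly Pb 0 (hf_x1 Pb)) (hf_mult Pb (hf_poly Pb (- B) (hf_x1 Pb)) (hf_t Pb g))"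
  define b where "b = hf_add (hf_poly Pb 0 (hf_x1 Pb)) (hf_mult Pb (hf_poly Pb 0 (hf_x1 Pb)) (hf_t Pb g))"
  have "(0, rf_eval B rf_x1 * rf_x1 ^ (g + 3)) =
        hf_add (hf_mult Pb a (hf_d Pb (hf_x1 Pb))) (hf_mult Pb b (hf_d Pb (hf_t Pb g)))"
    by (simp add: a_def b_def hf_t_eq hf_x1_eq hf_poly_base hf_d_base rf_deriv_rf_x1 hf_mult_def
        hf_add_def rf_eval_diff[of 0 B, simplified] power_add numeral_3_eq_3 power2_eq_square)
  moreover have "a \<in> O_V Pb g" "b \<in> O_V Pb g"
    unfolding O_V_def a_def b_def by blast+
  ultimately show ?thesis
    unfolding Omega_V_def by blast
qed

lemma poly_y_mem_O_UV: "(0, to_fract c * rf_x1 ^ n) \<in> O_UV (Pb :: 'k::field poly)"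
proof -
  have "(0, to_fract c * rf_x1 ^ n) = hf_mult Pb (to_fract 0, to_fract c) (hf_pow Pb (hf_x1 Pb) n)"
    by (simp add: hf_x1_eq hf_pow_base hf_mult_def)
  moreover have "(to_fract 0, to_fract c) \<in> O_U Pb"
    unfolding O_U_def by blast
  ultimately show ?thesis
    unfolding O_UV_def by blast
qed

section \<open>The curve and its two Frobenius lifts\<close>

locale hyperelliptic_frobenius_lift = truncated_witt p \<pi> \<sigma> mp
  for p :: nat and \<pi> :: "'w::comm_ring_1 \<Rightarrow> 'k::field" and \<sigma> mp +
  fixes g i :: nat and P2 Q2 :: "'w poly" and Pb Qb u \<alpha> v \<beta> :: "'k poly"
  assumes p_ne_2: "p \<noteq> 2"
    and Pb_def: "Pb = map_poly \<pi> P2"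
    and Q2_def: "Q2 = monom 1 1 * reflect_poly P2"
    and Qb_def: "Qb = monom 1 1 * reflect_poly Pb"
    and P2_monic: "lead_coeff P2 = 1"
    and P2_degree: "degree P2 = 2 * g + 1"
    and Pb_separable: "coprime Pb (pderiv Pb)"
    and lift_U: "P2 ^ p - pcompose (map_poly \<sigma> P2) (monom 1 p)
                   = map_poly mp (pderiv Pb ^ p * u - 2 * \<alpha> * Pb ^ p)"
    and lift_V: "Q2 ^ p - pcompose (map_poly \<sigma> Q2) (monom 1 p)
                   = map_poly mp (pderiv Qb ^ p * v - 2 * \<beta> * Qb ^ p)"
    and i_less_g: "i < g"
begin

lemma p_odd: "odd p" and p_gt_2: "2 < p"
proof -
  show "2 < p"
    using prime_ge_2_nat[OF prime_p] p_ne_2 by linarith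
  then show "odd p"
    using prime_odd_nat[OF prime_p] by simp
qed

lemma p_odd_cases:
  obtains r where "p = Suc (2 * r)" and "0 < r"
proof
  show "p = Suc (2 * (p div 2))" and "0 < p div 2"
    using p_odd p_gt_2 odd_two_times_div_two_succ[of p] by simp_all
qed

lemma Pb_degree: "degree Pb = 2 * g + 1" and Pb_monic: "lead_coeff Pb = 1"
proof -
  show "degree Pb = 2 * g + 1"
    unfolding Pb_def using P2_degree P2_monic pi_one by (subst map_poly_degree_eq) auto
  then show "lead_coeff Pb = 1"
    using P2_degree P2_monic pi_one by (simp add: Pb_def coeff_map_poly)
qed

lemma Pb_nonzero: "Pb \<noteq> 0"
  using Pb_monic by auto

lemma Q2_reflect: "Q2 = reflect_upto (2 * g + 2) P2"
  unfolding Q2_def using monom_mult_reflect_poly[OF P2_degree] by simp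

lemma Qb_reflect: "Qb = reflect_upto (2 * g + 2) Pb"
  unfolding Qb_def using monom_mult_reflect_poly[OF Pb_degree] by simp

lemma Pb_reflect: "Pb = reflect_upto (2 * g + 2) Qb"
  unfolding Qb_reflect by (rule reflect_upto_reflect_upto[symmetric]) (simp add: Pb_degree)

lemma Qb_degree: "degree Qb \<le> 2 * g + 2"
  unfolding Qb_reflect by (rule degree_reflect_upto)

lemma map_poly_Q2: "map_poly \<pi> Q2 = Qb"
  by (simp add: Q2_reflect Qb_reflect Pb_def reflect_upto_map_poly)

lemma Qb_separable: "coprime Qb (pderiv Qb)"
  using coprime_pderiv_reflect_upto[OF Pb_separable Pb_degree] by (simp add: Qb_reflect)

lemma u_dvd: "Pb ^ (p - 1) dvd monom 1 (p - 1) + pderiv u"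
  using frobenius_lift_dvd[of P2 u \<alpha>] Pb_separable lift_U by (simp add: Pb_def)

lemma v_dvd: "Qb ^ (p - 1) dvd monom 1 (p - 1) + pderiv v"
  using frobenius_lift_dvd[of Q2 v \<beta>] Qb_separable lift_V by (simp add: map_poly_Q2)

lemma lift_V_reflect_lift_U:
  "pderiv Qb ^ p * v - 2 * \<beta> * Qb ^ p
     = reflect_upto ((2 * g + 2) * p) (pderiv Pb ^ p * u - 2 * \<alpha> * Pb ^ p)"
  and degree_lift_U: "degree (pderiv Pb ^ p * u - 2 * \<alpha> * Pb ^ p) \<le> (2 * g + 2) * p"
proof -
  have "degree P2 \<le> 2 * g + 2"
    by (simp add: P2_degree)
  from frobenius_defect_reflect_upto[OF this lift_U lift_V[unfolded Q2_reflect]]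
  show "pderiv Qb ^ p * v - 2 * \<beta> * Qb ^ p
     = reflect_upto ((2 * g + 2) * p) (pderiv Pb ^ p * u - 2 * \<alpha> * Pb ^ p)"
    and "degree (pderiv Pb ^ p * u - 2 * \<alpha> * Pb ^ p) \<le> (2 * g + 2) * p"
    by simp_all
qed

text \<open>Evaluating the reflected equation at \<open>x\<^sub>1 = 1/x\<close> relates the two lifts inside \<open>k(x)\<close>;
  Frobenius on \<open>Q'(x\<^sub>1) = x\<^sub>1\<^sup>2\<^sup>g\<^sup>+\<^sup>2((2g+2)xP - x\<^sup>2P')\<close> separates the terms.\<close>

lemma lifts_relation:
  "to_fract (pderiv Pb) ^ p * (to_fract u + rf_x ^ (2 * p) * rf_eval v rf_x1)
   = to_fract Pb ^ p * (2 * to_fract \<alpha> + of_nat (2 * g + 2) ^ p * rf_x ^ p * rf_eval v rf_x1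
                        - 2 * rf_eval \<beta> rf_x1)"
proof -
  define n where "n = 2 * g + 2"
  define F where "F = pderiv Pb ^ p * u - 2 * \<alpha> * Pb ^ p"
  define P P' V B where "P = to_fract Pb" and "P' = to_fract (pderiv Pb)"
    and "V = rf_eval v rf_x1" and "B = rf_eval \<beta> rf_x1"
  have odd_char: "prime CHAR('k)" "odd CHAR('k)"
    using prime_CHAR p_odd CHAR_k by simp_all
  have Qb_at: "rf_eval Qb rf_x1 = rf_x1 ^ n * P"
    using rf_eval_rf_x1[OF Qb_degree] by (simp only: n_def P_def Pb_reflect[symmetric])
  have dQb_at: "rf_eval (pderiv Qb) rf_x1 = rf_x1 ^ n * (of_nat n * rf_x * P - rf_x ^ 2 * P')"
    using rf_eval_pderiv_rf_x1[OF Qb_degree] by (simp only: n_def P_def P'_def Pb_reflect[symmetric])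
  have "rf_x1 ^ (n * p) * to_fract F = rf_eval (reflect_upto (n * p) F) rf_x1"
    using rf_eval_reflect_upto[OF degree_lift_U, of rf_x1] by (simp add: n_def F_def)
  also have "\<dots> = rf_eval (pderiv Qb) rf_x1 ^ p * V - 2 * B * rf_eval Qb rf_x1 ^ p"
    unfolding F_def n_def lift_V_reflect_lift_U[symmetric]
    by (simp add: V_def B_def rf_eval_diff rf_eval_mult rf_eval_power)
  also have "\<dots>
      = rf_x1 ^ (n * p) * (((of_nat n * rf_x * P) ^ p - (rf_x ^ 2 * P') ^ p) * V - 2 * B * P ^ p)"
  proof -
    have dQb: "rf_eval (pderiv Qb) rf_x1 ^ p
        = rf_x1 ^ (n * p) * ((of_nat n * rf_x * P) ^ p - (rf_x ^ 2 * P') ^ p)"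
      unfolding dQb_at power_mult_distrib power_mult rf_diff_power_CHAR[OF odd_char, unfolded CHAR_k] ..
    have Qb: "rf_eval Qb rf_x1 ^ p = rf_x1 ^ (n * p) * P ^ p"
      unfolding Qb_at power_mult_distrib power_mult ..
    show ?thesis
      unfolding dQb Qb by (simp add: algebra_simps)
  qed
  finally have "to_fract F = ((of_nat n * rf_x * P) ^ p - (rf_x ^ 2 * P') ^ p) * V - 2 * B * P ^ p"
    by simp
  moreover have "to_fract F = P' ^ p * to_fract u - 2 * to_fract \<alpha> * P ^ p"
    by (simp add: F_def P_def P'_def to_fract_power)
  ultimately have "P' ^ p * to_fract u - 2 * to_fract \<alpha> * P ^ p
      = ((of_nat n * rf_x * P) ^ p - (rf_x ^ 2 * P') ^ p) * V - 2 * B * P ^ p"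
    by simp
  also have "\<dots> = (of_nat n ^ p * rf_x ^ p * P ^ p - rf_x ^ (2 * p) * P' ^ p) * V - 2 * B * P ^ p"
    by (simp only: power_mult_distrib power_mult)
  finally show ?thesis
    unfolding P_def[symmetric] P'_def[symmetric] V_def[symmetric] B_def[symmetric] n_def[symmetric]
    by (simp add: algebra_simps)
qed

lemma h_numerator_factor:
  obtains w M where
    "to_fract u + rf_x ^ (2 * p) * rf_eval v rf_x1 = rf_x1 ^ M * to_fract (Pb ^ p * w)"
proof -
  define M where "M = max (degree v) (degree \<beta>)"
  have clear: "rf_x ^ M * rf_eval f rf_x1 = to_fract (reflect_upto M f)"
    if "degree f \<le> M" for f :: "'k poly"
    using rf_eval_rf_x1[OF that] by (simp add: field_simps)
  have XV: "rf_x ^ M * rf_eval v rf_x1 = to_fract (reflect_upto M v)"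
    and XB: "rf_x ^ M * rf_eval \<beta> rf_x1 = to_fract (reflect_upto M \<beta>)"
    by (intro clear, simp add: M_def)+
  define w where "w = monom 1 M * u + monom 1 (2 * p) * reflect_upto M v"
  define e where "e = 2 * monom 1 M * \<alpha>
      + smult (of_nat (2 * g + 2) ^ p) (monom 1 p * reflect_upto M v) - 2 * reflect_upto M \<beta>"
  have w: "to_fract w = rf_x ^ M * (to_fract u + rf_x ^ (2 * p) * rf_eval v rf_x1)"
    by (simp add: w_def to_fract_monom XV[symmetric] algebra_simps)
  have "to_fract (pderiv Pb ^ p * w)
      = rf_x ^ M * (to_fract (pderiv Pb) ^ p * (to_fract u + rf_x ^ (2 * p) * rf_eval v rf_x1))"
    by (simp add: w to_fract_power algebra_simps)
  also have "\<dots> = rf_x ^ M * (to_fract Pb ^ p * (2 * to_fract \<alpha>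
      + of_nat (2 * g + 2) ^ p * rf_x ^ p * rf_eval v rf_x1 - 2 * rf_eval \<beta> rf_x1))"
    by (simp only: lifts_relation)
  also have "\<dots> = to_fract (Pb ^ p * e)"
    by (simp add: e_def to_fract_power to_fract_monom to_fract_smult XV[symmetric] XB[symmetric]
        rf_const.hom_power rf_const.hom_of_nat algebra_simps del: of_nat_add of_nat_Suc)
  finally have "Pb ^ p dvd pderiv Pb ^ p * w"
    by (metis dvd_triv_left to_fract_eq_iff)
  then obtain w0 where "w = Pb ^ p * w0"
    using coprime_dvd_mult_poly[OF coprime_power_poly[OF Pb_separable]] by (metis dvdE)
  moreover have "to_fract u + rf_x ^ (2 * p) * rf_eval v rf_x1 = rf_x1 ^ M * to_fract w"
    by (simp add: w field_simps)
  ultimately show ?thesis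
    using that by blast
qed

definition fU :: "'k hf" where
  "fU = hf_mult Pb (hf_mult Pb (hf_mult Pb (hf_pow Pb hf_x (i * p))
          (hf_add (hf_pow Pb hf_x (p - 1)) (hf_poly Pb (pderiv u) hf_x)))
          (hf_inv Pb (hf_pow Pb hf_y (p - 1))))
        (hf_mult Pb (hf_d Pb hf_x) (hf_inv Pb hf_y))"

definition fV :: "'k hf" where
  "fV = hf_neg (hf_mult Pb (hf_mult Pb (hf_mult Pb (hf_pow Pb (hf_x1 Pb) (p * (g - 1 - i)))
          (hf_add (hf_pow Pb (hf_x1 Pb) (p - 1)) (hf_poly Pb (pderiv v) (hf_x1 Pb))))
          (hf_inv Pb (hf_pow Pb (hf_t Pb g) (p - 1))))
        (hf_mult Pb (hf_d Pb (hf_x1 Pb)) (hf_inv Pb (hf_t Pb g))))"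

definition h :: "'k hf" where
  "h = hf_mult Pb (hf_mult Pb (hf_pow Pb hf_x (i * p))
          (hf_add (hf_poly Pb u hf_x) (hf_mult Pb (hf_pow Pb hf_x (2 * p)) (hf_poly Pb v (hf_x1 Pb)))))
        (hf_inv Pb (hf_pow Pb hf_y p))"

lemma fU_eq:
  "fU = (0, rf_x ^ (i * p) * (rf_x ^ (p - 1) + to_fract (pderiv u)) / to_fract Pb ^ ((p + 1) div 2))"
proof -
  obtain r where p: "p = Suc (2 * r)" by (rule p_odd_cases)
  then have "hf_pow Pb hf_y (p - 1) = (to_fract Pb ^ r, 0)" "(p + 1) div 2 = Suc r"
    by (simp_all add: hf_y_eq hf_pow_y_even)
  then show ?thesis
    using Pb_nonzero unfolding fU_def
    by (simp add: hf_x_eq hf_y_eq hf_pow_base hf_inv_base hf_inv_y hf_poly_base hf_d_base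
        hf_mult_shapes hf_add_def field_simps)
qed

lemma h_eq:
  "h = (0, rf_x ^ (i * p) * (to_fract u + rf_x ^ (2 * p) * rf_eval v rf_x1)
            / to_fract Pb ^ ((p + 1) div 2))"
proof -
  obtain r where p: "p = Suc (2 * r)" by (rule p_odd_cases)
  then have "hf_pow Pb hf_y p = (0, to_fract Pb ^ r)" "(p + 1) div 2 = Suc r"
    by (simp_all only: hf_y_eq hf_pow_y_odd) simp_all
  then show ?thesis
    using Pb_nonzero unfolding h_def
    by (simp add: hf_x_eq hf_x1_eq hf_pow_base hf_inv_base hf_inv_y hf_poly_base hf_mult_shapes
        hf_add_def field_simps)
qed

lemma fV_eq:
  "fV = (0, rf_x1 ^ (p * (g - 1 - i)) * (rf_x1 ^ (p - 1) + rf_eval (pderiv v) rf_x1) * rf_x1 ^ 2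
            / ((rf_x1 ^ (g + 1)) ^ p * to_fract Pb ^ ((p + 1) div 2)))"
proof -
  obtain r where p: "p = Suc (2 * r)" by (rule p_odd_cases)
  define T where "T = (rf_x1 :: 'k rf) ^ (g + 1)"
  have T_power: "hf_pow Pb (0, T) (p - 1) = ((T * T * to_fract Pb) ^ r, 0)"
    and half: "(p + 1) div 2 = Suc r"
    using p by (simp_all add: hf_pow_y_even)
  have "T ^ p = T ^ r * T ^ r * T"
    unfolding p by (simp add: mult_2 power_add)
  then have denominator: "T ^ p * to_fract Pb ^ Suc r = (T * T * to_fract Pb) ^ r * (T * to_fract Pb)"
    by (simp add: algebra_simps)
  have "T \<noteq> 0"
    by (simp add: T_def)
  then show ?thesis
    using Pb_nonzero
    unfolding fV_def hf_x1_eq hf_t_eq T_def[symmetric] T_power hf_pow_base hf_inv_base hf_inv_y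
      hf_poly_base hf_d_base rf_deriv_rf_x1 hf_mult_shapes hf_add_def hf_neg_def fst_conv snd_conv
      add_0 minus_zero half denominator
    by (simp add: field_simps)
qed

lemma fU_regular: "fU \<in> Omega_U Pb"
proof -
  obtain r where p: "p = Suc (2 * r)" and "0 < r" by (rule p_odd_cases)
  then obtain r0 where r: "r = Suc r0"
    using gr0_implies_Suc by blast
  obtain c where "monom 1 (p - 1) + pderiv u = Pb ^ (p - 1) * c"
    using u_dvd by (elim dvdE)
  from arg_cong[OF this, of to_fract]
  have "rf_x ^ (p - 1) + to_fract (pderiv u) = to_fract Pb ^ (p - 1) * to_fract c"
    by (simp add: to_fract_monom to_fract_power)
  moreover have "to_fract Pb ^ (p - 1) = to_fract Pb ^ r0 * to_fract Pb ^ r0 * to_fract Pb * to_fract Pb"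
    and "to_fract Pb ^ ((p + 1) div 2) = to_fract Pb ^ r0 * to_fract Pb * to_fract Pb"
    unfolding p r by (simp_all add: mult_2 power_add)
  ultimately have "fU = (0, to_fract (monom 1 (i * p) * Pb ^ r0 * c))"
    using Pb_nonzero unfolding fU_eq by (simp add: to_fract_monom to_fract_power field_simps)
  then show ?thesis
    by (simp only: poly_y_mem_Omega_U)
qed

lemma h_regular: "h \<in> O_UV Pb"
proof -
  obtain r where p: "p = Suc (2 * r)" by (rule p_odd_cases)
  obtain w M where w: "to_fract u + rf_x ^ (2 * p) * rf_eval v rf_x1 = rf_x1 ^ M * to_fract (Pb ^ p * w)"
    by (rule h_numerator_factor)
  have "to_fract Pb ^ p = to_fract Pb ^ r * to_fract Pb ^ r * to_fract Pb"
    and "to_fract Pb ^ ((p + 1) div 2) = to_fract Pb ^ r * to_fract Pb"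
    unfolding p by (simp_all add: mult_2 power_add)
  then have "h = (0, to_fract (monom 1 (i * p) * Pb ^ r * w) * rf_x1 ^ M)"
    using Pb_nonzero unfolding h_eq w by (simp add: to_fract_monom to_fract_power field_simps)
  then show ?thesis
    by (simp only: poly_y_mem_O_UV)
qed

lemma fV_regular: "fV \<in> Omega_V Pb g"
proof -
  obtain r where p: "p = Suc (2 * r)" and "0 < r" by (rule p_odd_cases)
  then obtain r0 where r: "r = Suc r0"
    using gr0_implies_Suc by blast
  define T Z where "T = (rf_x1 :: 'k rf) ^ (g + 1)" and "Z = T * T * to_fract Pb"
  have "rf_eval Qb rf_x1 = rf_x1 ^ (2 * g + 2) * to_fract Pb"
    using rf_eval_rf_x1[OF Qb_degree] by (simp only: Pb_reflect[symmetric])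
  also have "rf_x1 ^ (2 * g + 2) = T * T"
    unfolding T_def by (simp add: mult_2 flip: power_add)
  finally have Qb_at: "rf_eval Qb rf_x1 = Z"
    by (simp add: Z_def)
  obtain c where "monom 1 (p - 1) + pderiv v = Qb ^ (p - 1) * c"
    using v_dvd by (elim dvdE)
  from arg_cong[OF this, of "\<lambda>q. rf_eval q rf_x1"]
  have numerator: "rf_x1 ^ (p - 1) + rf_eval (pderiv v) rf_x1 = Z ^ (p - 1) * rf_eval c rf_x1"
    by (simp add: rf_eval_add rf_eval_mult rf_eval_power rf_eval_monom Qb_at)
  define B where "B = monom 1 (p * (g - 1 - i)) * Qb ^ r0 * c"
  have "rf_eval B rf_x1 = rf_x1 ^ (p * (g - 1 - i)) * Z ^ r0 * rf_eval c rf_x1"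
    by (simp add: B_def rf_eval_mult rf_eval_power rf_eval_monom Qb_at)
  moreover have exps: "p - 1 = Suc r0 + Suc r0" "(p + 1) div 2 = Suc (Suc r0)" "p = Suc (Suc r0 + Suc r0)"
    using p r by simp_all
  have "Z ^ (p - 1) = Z ^ r0 * Z * Z * Z ^ r0"
    unfolding exps(1) by (simp only: power_add power_Suc mult_ac)
  moreover have "T ^ p * to_fract Pb ^ ((p + 1) div 2) = Z ^ r0 * Z * (T * to_fract Pb)"
    unfolding exps(2) unfolding exps(3) Z_def
    by (simp only: power_add power_Suc power_mult_distrib mult_ac)
  moreover have "rf_x1 ^ (g + 3) = T * rf_x1 ^ 2"
    unfolding T_def power_add[symmetric] by (simp add: numeral_3_eq_3)
  moreover have "T \<noteq> 0" "Z \<noteq> 0"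
    using Pb_nonzero by (simp_all add: T_def Z_def)
  ultimately have "fV = (0, rf_eval B rf_x1 * rf_x1 ^ (g + 3))"
    unfolding fV_eq T_def[symmetric] numerator using Pb_nonzero
    by (simp add: field_simps Z_def[symmetric], simp add: Z_def)
  then show ?thesis
    by (simp only: poly_t_mem_Omega_V)
qed

lemma fV_eq_x:
  "fV = (0, rf_x ^ (i * p) * (rf_x ^ (p - 1) + rf_x ^ (2 * p) * rf_x1 ^ 2 * rf_eval (pderiv v) rf_x1)
            / to_fract Pb ^ ((p + 1) div 2))"
proof -
  define j where "j = g - 1 - i"
  have "g + 1 = j + i + 2"
    using i_less_g by (simp add: j_def)
  then have "(g + 1) * p = p * j + i * p + (p - 1) + (p - 1) + 1 + 1"
    using p_gt_2 by (simp add: algebra_simps)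
  then have "rf_x ^ ((g + 1) * p)
      = rf_x ^ (p * j) * rf_x ^ (i * p) * (rf_x ^ (p - 1) * rf_x ^ (p - 1) * rf_x * rf_x)"
    by (simp only: power_add power_one_right mult.assoc)
  then have denominator: "(rf_x1 ^ (g + 1)) ^ p
      = inverse (rf_x ^ (p * j) * rf_x ^ (i * p) * (rf_x ^ (p - 1) * rf_x ^ (p - 1) * rf_x * rf_x))"
    by (simp only: power_mult[symmetric] power_inverse) (erule arg_cong)
  have "2 * p = (p - 1) + (p - 1) + 1 + 1"
    using p_gt_2 by simp
  then have numerator: "rf_x ^ (2 * p) = rf_x ^ (p - 1) * rf_x ^ (p - 1) * rf_x * rf_x"
    by (simp only: power_add power_one_right mult.assoc)
  show ?thesis
    using Pb_nonzero
    by (unfold fV_eq j_def[symmetric] denominator numerator, unfold power_inverse)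
      (simp add: field_simps power2_eq_square)
qed

lemma cocycle: "hf_add (hf_add fV (hf_neg fU)) (hf_d Pb h) = (0, 0)"
proof -
  obtain r where p: "p = Suc (2 * r)" by (rule p_odd_cases)
  define V' where "V' = rf_eval (pderiv v) rf_x1"
  have "CHAR('k) dvd i * p" "CHAR('k) dvd 2 * p"
    by (simp_all add: CHAR_k)
  then have "rf_deriv (rf_x ^ (i * p) * (to_fract u + rf_x ^ (2 * p) * rf_eval v rf_x1))
      = rf_x ^ (i * p) * (to_fract (pderiv u) - rf_x ^ (2 * p) * rf_x1 ^ 2 * V')"
    by (simp add: rf_deriv_mult rf_deriv_add rf_deriv_power_CHAR rf_deriv_rf_eval rf_deriv_rf_x1
        V'_def algebra_simps)
  moreover have "hf_d Pb h = (0, rf_deriv (rf_x ^ (i * p) * (to_fract u + rf_x ^ (2 * p) * rf_eval v rf_x1))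
                                  / to_fract Pb ^ ((p + 1) div 2))"
  proof -
    have "(p + 1) div 2 = Suc r" "CHAR('k) = Suc (2 * r)"
      using p CHAR_k by simp_all
    then show ?thesis
      unfolding h_eq by (simp only: hf_d_div_y_power)
  qed
  ultimately have "hf_d Pb h
      = (0, rf_x ^ (i * p) * (to_fract (pderiv u) - rf_x ^ (2 * p) * rf_x1 ^ 2 * V')
              / to_fract Pb ^ ((p + 1) div 2))"
    by simp
  then show ?thesis
    unfolding fV_eq_x fU_eq V'_def[symmetric]
    by (simp add: hf_add_def hf_neg_def diff_divide_distrib add_divide_distrib algebra_simps)
qed

end

theorem mainTheorem13:
  fixes p g i :: nat
    and \<pi> :: "'w::comm_ring_1 \<Rightarrow> 'k::field" and \<sigma> :: "'w \<Rightarrow> 'w" and mp :: "'k \<Rightarrow> 'w"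
    and P2 :: "'w poly" and u \<alpha> v \<beta> :: "'k poly"
  defines "Pb \<equiv> map_poly \<pi> P2"
  defines "Q2 \<equiv> monom 1 1 * reflect_poly P2"
  defines "Qb \<equiv> monom 1 1 * reflect_poly Pb"
  assumes k_fin: "finite (UNIV :: 'k set)"
    and p_char: "CHAR('k) = p" and p_ne2: "p \<noteq> 2"
    and W2: "is_W2 p \<pi> \<sigma> mp"
    and P2_monic: "lead_coeff P2 = 1" and P2_deg: "degree P2 = 2 * g + 1"
    and Pb_sep: "coprime Pb (pderiv Pb)"
    and hu: "P2 ^ p - pcompose (map_poly \<sigma> P2) (monom 1 p)
               = map_poly mp (pderiv Pb ^ p * u - 2 * \<alpha> * Pb ^ p)"
    and hv: "Q2 ^ p - pcompose (map_poly \<sigma> Q2) (monom 1 p)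
               = map_poly mp (pderiv Qb ^ p * v - 2 * \<beta> * Qb ^ p)"
    and hi: "i \<le> g - 1" "g \<ge> 1"
  defines "x \<equiv> hf_x :: 'k hf"
  defines "y \<equiv> hf_y :: 'k hf"
  defines "x1 \<equiv> hf_x1 Pb"
  defines "t \<equiv> hf_t Pb g"
  defines "mul \<equiv> hf_mult Pb" and "pw \<equiv> hf_pow Pb" and "iv \<equiv> hf_inv Pb"
  defines "fU \<equiv> mul (mul (mul (pw x (i * p))
                        (hf_add (pw x (p - 1)) (hf_poly Pb (pderiv u) x)))
                        (iv (pw y (p - 1))))
                   (mul (hf_d Pb x) (iv y))"
  defines "fV \<equiv> hf_neg (mul (mul (mul (pw x1 (p * (g - 1 - i)))
                        (hf_add (pw x1 (p - 1)) (hf_poly Pb (pderiv v) x1)))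
                        (iv (pw t (p - 1))))
                   (mul (hf_d Pb x1) (iv t)))"
  defines "h \<equiv> mul (mul (pw x (i * p))
                     (hf_add (hf_poly Pb u x) (mul (pw x (2 * p)) (hf_poly Pb v x1))))
                   (iv (pw y p))"
  shows "fU \<in> Omega_U Pb \<and> fV \<in> Omega_V Pb g \<and> h \<in> O_UV Pb
         \<and> hf_add (hf_add fV (hf_neg fU)) (hf_d Pb h) = (0, 0)"
proof -
  have "prime p"
    using p_char k_fin prime_CHAR_semidom finite_imp_CHAR_pos by metis
  then interpret C: hyperelliptic_frobenius_lift p \<pi> \<sigma> mp g i P2 Q2 Pb Qb u \<alpha> v \<beta>
    using W2 p_char p_ne2 P2_monic P2_deg Pb_sep hu hv hi
    by unfold_locales (simp_all add: Pb_def Q2_def Qb_def)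
  have "fU = C.fU" "fV = C.fV" "h = C.h"
    unfolding fU_def fV_def h_def C.fU_def C.fV_def C.h_def x_def y_def x1_def t_def mul_def pw_def
      iv_def by (rule refl)+
  then show ?thesis
    using C.fU_regular C.fV_regular C.h_regular C.cocycle by simp
qed

end
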